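(* Let $\mathbf{P}$ be a poset of width $w$ and let $k\ge0$. Then $|P_k|\le 2\,w^{(3w)^k}$.
   Context: The width of a poset is the maximum size of an antichain. Sets $P_k$: $L_0=\min(\mathbf{P})$, $U_0=\max(\mathbf{P})\setminus L_0$, $P_0=L_0\cup U_0$. For $i\ge1$, call $R\subseteq P_{i-1}$ admissible if $R\cap L_{i-1}$ is downward closed within $L_{i-1}$ and $R\cap U_{i-1}$ is upward closed within $U_{i-1}$; for admissible $R$ let $P_{i-1,R}=\{p\in P: \forall l\in L_{i-1}\,(l\le p\iff l\in R)\text{ and }\forall u\in U_{i-1}\,(p\le u\iff u\in R)\}$. Then $L_i=L_{i-1}\cup\bigcup_R\min(P_{i-1,R})$, $U_i=(U_{i-1}\cup\bigcup_R\max(P_{i-1,R}))\setminus L_i$ (unions over admissible $R$; $\min$ and $\max$ are taken in the induced subposet on $P_{i-1,R}$), and $P_i=L_i\cup U_i$. *)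

theory Defs
  imports Main
begin

text \<open>A poset is a carrier set P with a relation r (pairs (x,y) meaning x \<le> y)
  satisfying the library predicate partial_order_on P r.\<close>

definition antichain :: "'a set \<Rightarrow> 'a rel \<Rightarrow> 'a set \<Rightarrow> bool" where
  "antichain P r A \<longleftrightarrow> A \<subseteq> P \<and> (\<forall>x\<in>A. \<forall>y\<in>A. (x, y) \<in> r \<longrightarrow> x = y)"

definition width :: "'a set \<Rightarrow> 'a rel \<Rightarrow> nat" where
  "width P r = Max {card A | A. antichain P r A}"

definition min_set :: "'a rel \<Rightarrow> 'a set \<Rightarrow> 'a set" where
  "min_set r S = {x \<in> S. \<forall>y\<in>S. (y, x) \<in> r \<longrightarrow> y = x}"

definition max_set :: "'a rel \<Rightarrow> 'a set \<Rightarrow> 'a set" where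
  "max_set r S = {x \<in> S. \<forall>y\<in>S. (x, y) \<in> r \<longrightarrow> y = x}"

definition admissible :: "'a rel \<Rightarrow> 'a set \<Rightarrow> 'a set \<Rightarrow> 'a set \<Rightarrow> bool" where
  "admissible r L U R \<longleftrightarrow> R \<subseteq> L \<union> U
     \<and> (\<forall>x\<in>R \<inter> L. \<forall>y\<in>L. (y, x) \<in> r \<longrightarrow> y \<in> R)
     \<and> (\<forall>x\<in>R \<inter> U. \<forall>y\<in>U. (x, y) \<in> r \<longrightarrow> y \<in> R)"

definition cls :: "'a set \<Rightarrow> 'a rel \<Rightarrow> 'a set \<Rightarrow> 'a set \<Rightarrow> 'a set \<Rightarrow> 'a set" where
  "cls P r L U R = {p \<in> P. (\<forall>l\<in>L. (l, p) \<in> r \<longleftrightarrow> l \<in> R) \<and> (\<forall>u\<in>U. (p, u) \<in> r \<longleftrightarrow> u \<in> R)}"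

primrec LU :: "'a set \<Rightarrow> 'a rel \<Rightarrow> nat \<Rightarrow> 'a set \<times> 'a set" where
  "LU P r 0 = (min_set r P, max_set r P - min_set r P)"
| "LU P r (Suc i) =
     (let L = fst (LU P r i); U = snd (LU P r i);
          Adm = {R. admissible r L U R};
          L' = L \<union> (\<Union>R\<in>Adm. min_set r (cls P r L U R));
          U' = (U \<union> (\<Union>R\<in>Adm. max_set r (cls P r L U R))) - L'
      in (L', U'))"

definition Lset :: "'a set \<Rightarrow> 'a rel \<Rightarrow> nat \<Rightarrow> 'a set" where
  "Lset P r i = fst (LU P r i)"

definition Uset :: "'a set \<Rightarrow> 'a rel \<Rightarrow> nat \<Rightarrow> 'a set" where
  "Uset P r i = snd (LU P r i)"

definition Pset :: "'a set \<Rightarrow> 'a rel \<Rightarrow> nat \<Rightarrow> 'a set" where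
  "Pset P r i = Lset P r i \<union> Uset P r i"

end

theory Submission
  imports Defs "HOL-Library.FuncSet"
begin

(* Write Adm_i for the admissible sets at stage i, so that
   P_(i+1) is contained in P_i together with min(P_(i,R)) and max(P_(i,R)) for R in Adm_i.
   Minimal and maximal elements form antichains, hence
     |P_(i+1)| <= |P_i| + 2w |Adm_i|.
   An admissible R is determined by the down-set R \<inter> L_i of L_i and the up-set R \<inter> U_i
   of U_i, and a down-set is determined by its antichain of maximal elements, so
   |Adm_i| is at most (#antichains in L_i) * (#antichains in U_i).  An antichain has at
   most w elements, so a set X carries at most |X|^w + 1 (and at most 2^|X|) antichains.
   For w >= 2 an induction on k with an elementary numeric estimate gives the bound;
   the step from P_0 (where |L_0|, |U_0| <= w) is handled with the bound 2^|X|.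
   The degenerate widths are separate: width 0 forces P = {}; in a chain (width 1)
   L_i stays inside the minimum and U_i inside the maximum of P, because then every
   class P_(i,R) is empty or all of P, so |P_k| <= 2.
   The file follows this outline: the recursion and the one-step growth bound, the
   counting of admissible sets via down-sets and antichains, the numeric estimates,
   the case w >= 2, the case w <= 1, and finally the theorem.  *)

definition adm_sets :: "'a set \<Rightarrow> 'a rel \<Rightarrow> nat \<Rightarrow> 'a set set" where
  "adm_sets P r i = {R. admissible r (Lset P r i) (Uset P r i) R}"

lemma Lset_0: "Lset P r 0 = min_set r P"
  and Uset_0: "Uset P r 0 = max_set r P - min_set r P"
  by (simp_all add: Lset_def Uset_def)

lemma Lset_Suc:
  "Lset P r (Suc i) = Lset P r i \<union> (\<Union>R\<in>adm_sets P r i. min_set r (cls P r (Lset P r i) (Uset P r i) R))"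
  and Uset_Suc:
  "Uset P r (Suc i) = (Uset P r i \<union> (\<Union>R\<in>adm_sets P r i. max_set r (cls P r (Lset P r i) (Uset P r i) R)))
     - Lset P r (Suc i)"
  by (simp_all add: Lset_def Uset_def adm_sets_def Let_def)

definition extremal_elems :: "'a set \<Rightarrow> 'a rel \<Rightarrow> nat \<Rightarrow> 'a set \<Rightarrow> 'a set" where
  "extremal_elems P r i R =
     min_set r (cls P r (Lset P r i) (Uset P r i) R) \<union> max_set r (cls P r (Lset P r i) (Uset P r i) R)"

lemma extremal_elems_subset: "extremal_elems P r i R \<subseteq> P"
  by (auto simp: extremal_elems_def min_set_def max_set_def cls_def)

lemma Pset_Suc_subset:
  "Pset P r (Suc i) \<subseteq> Pset P r i \<union> (\<Union>R\<in>adm_sets P r i. extremal_elems P r i R)"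
  unfolding Pset_def Uset_Suc[of P r i] Lset_Suc[of P r i] extremal_elems_def by auto

lemma Pset_subset: "Pset P r i \<subseteq> P"
proof (induction i)
  case 0
  then show ?case by (auto simp: Pset_def Lset_0 Uset_0 min_set_def max_set_def)
next
  case (Suc i)
  have "(\<Union>R\<in>adm_sets P r i. extremal_elems P r i R) \<subseteq> P"
    using extremal_elems_subset by (rule UN_least)
  then show ?case by (rule order_trans[OF Pset_Suc_subset Un_least[OF Suc.IH]])
qed

lemma Lset_subset: "Lset P r i \<subseteq> P" and Uset_subset: "Uset P r i \<subseteq> P"
  using Pset_subset[of P r i] by (auto simp: Pset_def)

section \<open>Antichains and the width\<close>

text \<open>Every antichain is no larger than the width (the maximum exists as P is finite).\<close>

lemma antichain_card_le_width:
  assumes "finite P" "antichain P r A"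
  shows "card A \<le> width P r"
proof -
  have "{card A | A. antichain P r A} \<subseteq> {..card P}"
    using assms(1) by (auto simp: antichain_def intro: card_mono)
  then have "finite {card A | A. antichain P r A}" using finite_subset by blast
  then show ?thesis unfolding width_def using assms(2) by (intro Max_ge) auto
qed

lemma card_min_set_le_width:
  assumes "finite P" "S \<subseteq> P"
  shows "card (min_set r S) \<le> width P r"
  using assms by (intro antichain_card_le_width) (auto simp: antichain_def min_set_def)

lemma card_max_set_le_width:
  assumes "finite P" "S \<subseteq> P"
  shows "card (max_set r S) \<le> width P r"
  using assms by (intro antichain_card_le_width) (auto simp: antichain_def max_set_def)

lemma card_Pset_0:
  assumes "finite P"
  shows "card (Lset P r 0) \<le> width P r" "card (Uset P r 0) \<le> width P r"
    "card (Pset P r 0) \<le> 2 * width P r"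
proof -
  have fin_max: "finite (max_set r P)"
    using assms finite_subset[of "max_set r P" P] by (auto simp: max_set_def)
  show L: "card (Lset P r 0) \<le> width P r"
    unfolding Lset_0 using card_min_set_le_width[OF assms subset_refl, of r] by simp
  have "card (Uset P r 0) \<le> card (max_set r P)"
    unfolding Uset_0 by (rule card_mono[OF fin_max]) blast
  then show U: "card (Uset P r 0) \<le> width P r"
    using card_max_set_le_width[OF assms subset_refl, of r] by simp
  show "card (Pset P r 0) \<le> 2 * width P r"
    using card_Un_le[of "Lset P r 0" "Uset P r 0"] L U by (simp add: Pset_def)
qed

lemma card_extremal_elems_le:
  assumes fin: "finite P"
  shows "card (extremal_elems P r i R) \<le> 2 * width P r"
proof -
  have cls: "cls P r (Lset P r i) (Uset P r i) R \<subseteq> P" by (auto simp: cls_def)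
  show ?thesis
    using card_Un_le[of "min_set r (cls P r (Lset P r i) (Uset P r i) R)"
        "max_set r (cls P r (Lset P r i) (Uset P r i) R)"]
      card_min_set_le_width[OF fin cls, of r] card_max_set_le_width[OF fin cls, of r]
    unfolding extremal_elems_def by linarith
qed

lemma card_Pset_Suc_le:
  assumes fin: "finite P"
  shows "card (Pset P r (Suc i)) \<le> card (Pset P r i) + 2 * width P r * card (adm_sets P r i)"
proof -
  let ?new = "\<Union>R\<in>adm_sets P r i. extremal_elems P r i R"
  have fin_adm: "finite (adm_sets P r i)"
  proof (rule finite_subset)
    show "adm_sets P r i \<subseteq> Pow (Pset P r i)"
      by (auto simp: adm_sets_def admissible_def Pset_def)
    show "finite (Pow (Pset P r i))" using finite_subset[OF Pset_subset fin] by simp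
  qed
  have "Pset P r i \<union> ?new \<subseteq> P"
    using Pset_subset extremal_elems_subset by (intro Un_least UN_least)
  then have "card (Pset P r (Suc i)) \<le> card (Pset P r i \<union> ?new)"
    by (rule card_mono[OF finite_subset[OF _ fin] Pset_Suc_subset])
  also have "\<dots> \<le> card (Pset P r i) + card ?new"
    by (rule card_Un_le)
  also have "card ?new \<le> (\<Sum>R\<in>adm_sets P r i. card (extremal_elems P r i R))"
    by (rule card_UN_le[OF fin_adm])
  also have "\<dots> \<le> card (adm_sets P r i) * (2 * width P r)"
    using sum_bounded_above[of "adm_sets P r i" "\<lambda>R. card (extremal_elems P r i R)" "2 * width P r"]
      card_extremal_elems_le[OF fin] by simp
  finally show ?thesis by (simp add: mult.commute)
qed

section \<open>Counting admissible sets\<close>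

text \<open>The down-closed subsets of X; an up-closed subset is a down-set for the converse.\<close>

definition downsets :: "'a rel \<Rightarrow> 'a set \<Rightarrow> 'a set set" where
  "downsets s X = {D. D \<subseteq> X \<and> (\<forall>x\<in>D. \<forall>y\<in>X. (y, x) \<in> s \<longrightarrow> y \<in> D)}"

lemma finite_antichains: "finite X \<Longrightarrow> finite {A. antichain X s A}"
  by (rule finite_subset[of _ "Pow X"]) (auto simp: antichain_def)

lemma finite_downsets: "finite X \<Longrightarrow> finite (downsets s X)"
  by (rule finite_subset[of _ "Pow X"]) (auto simp: downsets_def)

text \<open>In a finite partial order every element lies below a maximal one.  Choose, above
  x, an element with the fewest elements above it.\<close>

lemma exists_maximal_above:
  assumes fin: "finite S" and tr: "trans s" and anti: "antisym s"
    and refl: "\<And>y. y \<in> S \<Longrightarrow> (y, y) \<in> s" and x: "x \<in> S"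
  shows "\<exists>m\<in>max_set s S. (x, m) \<in> s"
proof -
  define up where "up y = {z \<in> S. (y, z) \<in> s}" for y
  have fin_up: "finite (up y)" for y using fin by (simp add: up_def)
  obtain m where m: "m \<in> up x" and fewest: "\<And>y. y \<in> up x \<Longrightarrow> card (up m) \<le> card (up y)"
    using ex_is_arg_min_if_finite[OF fin_up, of x "\<lambda>y. card (up y)"] x refl
    unfolding is_arg_min_def up_def by (auto simp: not_less)
  have "y = m" if y: "y \<in> S" "(m, y) \<in> s" for y
  proof (rule ccontr)
    assume "y \<noteq> m"
    have "up y \<subset> up m"
    proof
      show "up y \<subseteq> up m" using y tr unfolding up_def by (auto dest: transD)
      have "m \<in> up m" "m \<notin> up y"
        using m y \<open>y \<noteq> m\<close> refl anti unfolding up_def by (auto dest: antisymD)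
      then show "up y \<noteq> up m" by blast
    qed
    then have "card (up y) < card (up m)" by (rule psubset_card_mono[OF fin_up])
    moreover have "y \<in> up x" using m y tr unfolding up_def by (auto dest: transD)
    ultimately show False using fewest by fastforce
  qed
  then show ?thesis using m unfolding up_def max_set_def by blast
qed

text \<open>A down-set is the down-closure of its maximal elements, so it is determined by
  that antichain.\<close>

lemma card_downsets_le_antichains:
  assumes fin: "finite X" and tr: "trans s" and anti: "antisym s"
    and refl: "\<And>x. x \<in> X \<Longrightarrow> (x, x) \<in> s"
  shows "card (downsets s X) \<le> card {A. antichain X s A}"
proof (rule card_inj_on_le[where f = "max_set s"])
  have closure: "D = {y \<in> X. \<exists>m\<in>max_set s D. (y, m) \<in> s}" if "D \<in> downsets s X" for D
  proof -
    have "D \<subseteq> X" and fin_D: "finite D" using that fin finite_subset by (auto simp: downsets_def)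
    then have "\<exists>m\<in>max_set s D. (y, m) \<in> s" if "y \<in> D" for y
      using exists_maximal_above[OF fin_D tr anti] refl that by blast
    then show ?thesis using that by (auto simp: downsets_def max_set_def)
  qed
  show "inj_on (max_set s) (downsets s X)"
  proof (rule inj_onI)
    fix D1 D2 assume "D1 \<in> downsets s X" "D2 \<in> downsets s X" "max_set s D1 = max_set s D2"
    then show "D1 = D2" using closure[of D1] closure[of D2] by simp
  qed
  show "max_set s ` downsets s X \<subseteq> {A. antichain X s A}"
    by (auto simp: downsets_def max_set_def antichain_def)
  show "finite {A. antichain X s A}" by (rule finite_antichains[OF fin])
qed

lemma admissible_parts:
  assumes "admissible s L U R"
  shows "R \<subseteq> L \<union> U" "R \<inter> L \<in> downsets s L" "R \<inter> U \<in> downsets (s\<inverse>) U"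
  using assms unfolding admissible_def downsets_def by blast+

lemma card_admissible_le:
  assumes "finite L" "finite U" and tr: "trans s" and anti: "antisym s"
    and refl: "\<And>x. x \<in> L \<union> U \<Longrightarrow> (x, x) \<in> s"
  shows "card {R. admissible s L U R} \<le> card {A. antichain L s A} * card {A. antichain U s A}"
proof -
  have "card {R. admissible s L U R} \<le> card (downsets s L \<times> downsets (s\<inverse>) U)"
  proof (rule card_inj_on_le[where f = "\<lambda>R. (R \<inter> L, R \<inter> U)"])
    show "inj_on (\<lambda>R. (R \<inter> L, R \<inter> U)) {R. admissible s L U R}"
    proof (rule inj_onI)
      fix R1 R2 assume "R1 \<in> {R. admissible s L U R}" "R2 \<in> {R. admissible s L U R}"
        and eq: "(R1 \<inter> L, R1 \<inter> U) = (R2 \<inter> L, R2 \<inter> U)"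
      then have "R1 \<subseteq> L \<union> U" "R2 \<subseteq> L \<union> U" using admissible_parts(1) by blast+
      moreover have "R1 \<inter> L = R2 \<inter> L" "R1 \<inter> U = R2 \<inter> U" using eq by simp_all
      ultimately show "R1 = R2" by blast
    qed
    show "(\<lambda>R. (R \<inter> L, R \<inter> U)) ` {R. admissible s L U R} \<subseteq> downsets s L \<times> downsets (s\<inverse>) U"
      using admissible_parts(2,3) by blast
    show "finite (downsets s L \<times> downsets (s\<inverse>) U)"
      using assms(1,2) by (simp add: finite_downsets)
  qed
  also have "\<dots> = card (downsets s L) * card (downsets (s\<inverse>) U)"
    by (rule card_cartesian_product)
  also have "\<dots> \<le> card {A. antichain L s A} * card {A. antichain U (s\<inverse>) A}"
  proof (rule mult_le_mono)
    show "card (downsets s L) \<le> card {A. antichain L s A}"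
      using refl by (intro card_downsets_le_antichains[OF assms(1) tr anti]) auto
    show "card (downsets (s\<inverse>) U) \<le> card {A. antichain U (s\<inverse>) A}"
      using refl tr anti by (intro card_downsets_le_antichains[OF assms(2)]) auto
  qed
  also have "{A. antichain U (s\<inverse>) A} = {A. antichain U s A}"
    by (auto simp: antichain_def)
  finally show ?thesis .
qed

lemma card_antichains_le_pow2:
  "finite X \<Longrightarrow> card {A. antichain X s A} \<le> 2 ^ card X"
  unfolding card_Pow[symmetric] by (intro card_mono) (auto simp: antichain_def)

text \<open>Every nonempty set of at most w elements is the image of
  {..<w}, so there are at most card X ^ w + 1 of them.\<close>

lemma card_small_subsets_le:
  assumes fin: "finite X"
  shows "card {A. A \<subseteq> X \<and> card A \<le> w} \<le> card X ^ w + 1"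
proof -
  have "{A. A \<subseteq> X \<and> card A \<le> w} \<subseteq> insert {} ((\<lambda>f. f ` {..<w}) ` ({..<w} \<rightarrow>\<^sub>E X))"
  proof
    fix A assume A: "A \<in> {A. A \<subseteq> X \<and> card A \<le> w}"
    show "A \<in> insert {} ((\<lambda>f. f ` {..<w}) ` ({..<w} \<rightarrow>\<^sub>E X))"
    proof (cases "A = {}")
      case False
      have "finite A" using A fin finite_subset by blast
      then obtain g where g: "bij_betw g {..<card A} A"
        using ex_bij_betw_nat_finite lessThan_atLeast0 by metis
      have "0 < card A" using False \<open>finite A\<close> by (simp add: card_gt_0_iff)
      define f where "f i = g (if i < card A then i else 0)" for i
      have g_in: "i < card A \<Longrightarrow> g i \<in> A" for i using g by (auto simp: bij_betw_def)
      have "restrict f {..<w} \<in> {..<w} \<rightarrow>\<^sub>E X"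
        using g_in \<open>0 < card A\<close> A by (auto simp: f_def)
      moreover have "f ` {..<w} = A"
      proof
        show "f ` {..<w} \<subseteq> A" using g_in \<open>0 < card A\<close> by (auto simp: f_def)
        have "g i \<in> f ` {..<w}" if "i < card A" for i
          using that A by (intro image_eqI[of _ _ i]) (auto simp: f_def)
        then have "g ` {..<card A} \<subseteq> f ` {..<w}" by auto
        moreover have "g ` {..<card A} = A" using g by (simp add: bij_betw_def)
        ultimately show "A \<subseteq> f ` {..<w}" by simp
      qed
      ultimately show ?thesis by (metis image_eqI image_restrict_eq insertI2)
    qed simp
  qed
  then have "card {A. A \<subseteq> X \<and> card A \<le> w}
             \<le> card (insert {} ((\<lambda>f. f ` {..<w}) ` ({..<w} \<rightarrow>\<^sub>E X)))"
    using fin by (intro card_mono) (auto intro!: finite_PiE)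
  also have "\<dots> \<le> card ((\<lambda>f. f ` {..<w}) ` ({..<w} \<rightarrow>\<^sub>E X)) + 1"
    using fin by (simp add: card_insert_if finite_PiE)
  also have "\<dots> \<le> card ({..<w} \<rightarrow>\<^sub>E X) + 1"
    using fin by (simp add: card_image_le finite_PiE)
  also have "card ({..<w} \<rightarrow>\<^sub>E X) = card X ^ w"
    by (simp add: card_PiE)
  finally show ?thesis .
qed

lemma card_antichains_le_poly:
  assumes "finite P" "X \<subseteq> P"
  shows "card {A. antichain X s A} \<le> card X ^ width P s + 1"
proof -
  have fin: "finite X" using assms finite_subset by blast
  have "{A. antichain X s A} \<subseteq> {A. A \<subseteq> X \<and> card A \<le> width P s}"
    using assms antichain_card_le_width[OF assms(1)] by (auto simp: antichain_def)
  moreover have "finite {A. A \<subseteq> X \<and> card A \<le> width P s}"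
    using fin by (auto intro: finite_subset[of _ "Pow X"])
  ultimately have "card {A. antichain X s A} \<le> card {A. A \<subseteq> X \<and> card A \<le> width P s}"
    by (simp add: card_mono)
  also have "\<dots> \<le> card X ^ width P s + 1" by (rule card_small_subsets_le[OF fin])
  finally show ?thesis .
qed

lemma card_adm_sets_le:
  assumes fin: "finite P" and po: "partial_order_on P r"
  shows "card (adm_sets P r i) \<le> card {A. antichain (Lset P r i) r A} * card {A. antichain (Uset P r i) r A}"
  unfolding adm_sets_def
proof (rule card_admissible_le)
  show "finite (Lset P r i)" "finite (Uset P r i)"
    using fin Lset_subset Uset_subset finite_subset by metis+
  show "trans r" "antisym r" using po by (auto simp: partial_order_on_def preorder_on_def)
  show "(x, x) \<in> r" if "x \<in> Lset P r i \<union> Uset P r i" for x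
    using po that Lset_subset[of P r i] Uset_subset[of P r i]
    by (auto simp: partial_order_on_def preorder_on_def refl_on_def)
qed

lemma card_adm_sets_0:
  assumes fin: "finite P" and po: "partial_order_on P r"
  shows "card (adm_sets P r 0) \<le> 4 ^ width P r"
proof -
  have fin_L: "finite (Lset P r 0)" and fin_U: "finite (Uset P r 0)"
    using fin Lset_subset Uset_subset finite_subset by metis+
  have "card (adm_sets P r 0) \<le> card {A. antichain (Lset P r 0) r A} * card {A. antichain (Uset P r 0) r A}"
    by (rule card_adm_sets_le[OF fin po])
  also have "\<dots> \<le> 2 ^ card (Lset P r 0) * 2 ^ card (Uset P r 0)"
    by (intro mult_le_mono card_antichains_le_pow2 fin_L fin_U)
  also have "\<dots> \<le> 2 ^ width P r * 2 ^ width P r"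
    using card_Pset_0[OF fin] by (intro mult_le_mono power_increasing) auto
  finally show ?thesis by (simp add: power_mult_distrib[symmetric])
qed

lemma card_adm_sets_poly:
  assumes fin: "finite P" and po: "partial_order_on P r"
  shows "card (adm_sets P r i) \<le> (card (Pset P r i) ^ width P r + 1) ^ 2"
proof -
  let ?N = "card (Pset P r i)" and ?w = "width P r"
  have fin_P: "finite (Pset P r i)" using fin Pset_subset finite_subset by metis
  have "card (Lset P r i) \<le> ?N" "card (Uset P r i) \<le> ?N"
    using card_mono[OF fin_P] by (auto simp: Pset_def)
  then have L: "card (Lset P r i) ^ ?w + 1 \<le> ?N ^ ?w + 1"
    and U: "card (Uset P r i) ^ ?w + 1 \<le> ?N ^ ?w + 1"
    by (simp_all add: power_mono)
  have "card (adm_sets P r i) \<le> card {A. antichain (Lset P r i) r A} * card {A. antichain (Uset P r i) r A}"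
    by (rule card_adm_sets_le[OF fin po])
  also have "\<dots> \<le> (card (Lset P r i) ^ ?w + 1) * (card (Uset P r i) ^ ?w + 1)"
    by (intro mult_le_mono card_antichains_le_poly[OF fin] Lset_subset Uset_subset)
  also have "\<dots> \<le> (?N ^ ?w + 1) * (?N ^ ?w + 1)"
    by (rule mult_le_mono[OF L U])
  finally show ?thesis by (simp add: power2_eq_square)
qed

section \<open>Numeric estimates\<close>

lemma pow_estimate:
  fixes w :: nat assumes w: "w \<ge> 2"
  shows "2 * w * 4 ^ w \<le> w ^ (3 * w)"
proof -
  have "2 * w \<le> w ^ 2" using w by (simp add: power2_eq_square)
  also have "\<dots> \<le> w ^ w" using w by (intro power_increasing) auto
  finally have lin: "2 * w \<le> w ^ w" .
  have "(4::nat) ^ w = (2 ^ 2) ^ w" by simp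
  also have "\<dots> \<le> (w ^ 2) ^ w" using w by (intro power_mono) auto
  also have "\<dots> = w ^ (2 * w)" by (simp add: power_mult)
  finally have "4 ^ w \<le> w ^ (2 * w)" .
  with lin have "2 * w * 4 ^ w \<le> w ^ w * w ^ (2 * w)" by (rule mult_le_mono)
  also have "\<dots> = w ^ (3 * w)" by (simp add: power_add[symmetric])
  finally show ?thesis .
qed

text \<open>The bound for the first step, from card (Pset P r 0) \<le> 2 * w and at
  most 4 ^ w admissible sets.\<close>

lemma first_step_estimate:
  fixes w :: nat assumes "w \<ge> 2"
  shows "2 * w + 2 * w * 4 ^ w \<le> 2 * w ^ (3 * w)"
proof -
  have "2 * w \<le> 2 * w * 4 ^ w" by simp
  then show ?thesis using pow_estimate[OF assms] by linarith
qed

lemma later_step_estimate: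
  fixes w M N :: nat
  assumes w: "w \<ge> 2" and M: "w ^ (3 * w) \<le> M" and N: "N \<le> 2 * M"
  shows "N + 2 * w * (N ^ w + 1) ^ 2 \<le> 2 * M ^ (3 * w)"
proof -
  define X where "X = M ^ w"
  have "2 * 2 \<le> w * w" using mult_le_mono[OF w w] .
  then have "4 \<le> w ^ 2" by (simp add: power2_eq_square)
  also have "\<dots> \<le> w ^ (3 * w)" using w by (intro power_increasing) auto
  finally have big: "4 \<le> w ^ (3 * w)" .
  then have M1: "1 \<le> M" using M by linarith
  have MX: "M \<le> X" unfolding X_def using power_increasing[of 1 w M] M1 w by simp
  have X1: "1 \<le> X" using M1 MX by linarith
  have "N ^ w \<le> (2 * M) ^ w" using N by (rule power_mono) simp
  then have "N ^ w + 1 \<le> 2 ^ w * X + X" using X1 by (simp add: X_def power_mult_distrib)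
  also have "\<dots> \<le> 2 * 2 ^ w * X" by simp
  finally have "(N ^ w + 1) ^ 2 \<le> (2 * 2 ^ w * X) ^ 2" by (rule power_mono) simp
  also have "\<dots> = 4 * 4 ^ w * (X * X)" by (simp add: power2_eq_square power_mult_distrib[symmetric] algebra_simps)
  finally have sq: "(N ^ w + 1) ^ 2 \<le> 4 * 4 ^ w * (X * X)" .
  have "X \<le> X * X" using X1 by simp
  then have "N \<le> 2 * (X * X)" using N MX by linarith
  moreover have "2 * w * (N ^ w + 1) ^ 2 \<le> 2 * w * (4 * 4 ^ w * (X * X))"
    using sq by (rule mult_le_mono2)
  moreover have "2 * (X * X) + 2 * w * (4 * 4 ^ w * (X * X)) = (2 + 8 * w * 4 ^ w) * (X * X)"
    by (simp add: algebra_simps)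
  ultimately have lhs: "N + 2 * w * (N ^ w + 1) ^ 2 \<le> (2 + 8 * w * 4 ^ w) * (X * X)"
    by linarith
  have "1 + 4 * w * 4 ^ w \<le> 4 * w ^ (3 * w)" using pow_estimate[OF w] big by linarith
  also have "\<dots> \<le> w ^ (3 * w) * w ^ (3 * w)" using big by simp
  also have "\<dots> \<le> M ^ 2" using M by (simp add: power2_eq_square mult_le_mono)
  also have "\<dots> \<le> X" unfolding X_def using M1 w by (intro power_increasing) auto
  finally have "(1 + 4 * w * 4 ^ w) * (2 * (X * X)) \<le> X * (2 * (X * X))" by (rule mult_le_mono1)
  then have "(2 + 8 * w * 4 ^ w) * (X * X) \<le> 2 * X * (X * X)" by (simp add: algebra_simps)
  also have "2 * X * (X * X) = 2 * M ^ (3 * w)"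
    by (simp add: X_def power_add[symmetric] numeral_3_eq_3)
  finally show ?thesis using lhs by linarith
qed
section \<open>Posets of width at least two\<close>

lemma card_Pset_wide:
  assumes fin: "finite P" and po: "partial_order_on P r" and w: "2 \<le> width P r"
  shows "card (Pset P r k) \<le> 2 * width P r ^ ((3 * width P r) ^ k)"
proof (induction k)
  case 0
  then show ?case using card_Pset_0[OF fin] by simp
next
  case (Suc k)
  let ?w = "width P r"
  let ?N = "card (Pset P r k)"
  have step: "card (Pset P r (Suc k)) \<le> ?N + 2 * ?w * card (adm_sets P r k)"
    by (rule card_Pset_Suc_le[OF fin])
  show ?case
  proof (cases "k = 0")
    case True
    have "card (Pset P r (Suc k)) \<le> 2 * ?w + 2 * ?w * 4 ^ ?w"
      using step card_Pset_0(3)[OF fin, of r] mult_le_mono2[OF card_adm_sets_0[OF fin po], of "2 * ?w"]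
      unfolding True by linarith
    also have "\<dots> \<le> 2 * ?w ^ (3 * ?w)" by (rule first_step_estimate[OF w])
    finally show ?thesis using True by simp
  next
    case False
    define M where "M = ?w ^ ((3 * ?w) ^ k)"
    have "3 * ?w \<le> (3 * ?w) ^ k"
      using False w power_increasing[of 1 k "3 * ?w"] by simp
    then have M: "?w ^ (3 * ?w) \<le> M" unfolding M_def using w by (intro power_increasing) auto
    have "card (Pset P r (Suc k)) \<le> ?N + 2 * ?w * (?N ^ ?w + 1) ^ 2"
      using step mult_le_mono2[OF card_adm_sets_poly[OF fin po, of k], of "2 * ?w"] by linarith
    also have "\<dots> \<le> 2 * M ^ (3 * ?w)"
      using Suc.IH unfolding M_def[symmetric] by (rule later_step_estimate[OF w M])
    also have "M ^ (3 * ?w) = ?w ^ ((3 * ?w) ^ Suc k)"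
      by (simp add: M_def power_mult[symmetric] mult.commute)
    finally show ?thesis .
  qed
qed

section \<open>Posets of width at most one\<close>

text \<open>A single element is an antichain, so width 0 means an empty carrier.\<close>

lemma width_0_empty:
  assumes "finite P" "width P r = 0"
  shows "P = {}"
proof -
  have "card {p} \<le> width P r" if "p \<in> P" for p
    using that by (intro antichain_card_le_width[OF assms(1)]) (simp add: antichain_def)
  then show ?thesis using assms(2) by auto
qed

lemma width_le_1_comparable:
  assumes fin: "finite P" and po: "partial_order_on P r" and w: "width P r \<le> 1"
    and "x \<in> P" "y \<in> P"
  shows "(x, y) \<in> r \<or> (y, x) \<in> r"
proof (rule ccontr)
  assume incomparable: "\<not> ((x, y) \<in> r \<or> (y, x) \<in> r)"
  have refl: "(x, x) \<in> r" using po \<open>x \<in> P\<close>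
    by (auto simp: partial_order_on_def preorder_on_def refl_on_def)
  then have "x \<noteq> y" using incomparable by blast
  have "antichain P r {x, y}" using assms(4,5) incomparable refl by (auto simp: antichain_def)
  from antichain_card_le_width[OF fin this] w \<open>x \<noteq> y\<close> show False by simp
qed

lemma width_le_1_extremes:
  assumes fin: "finite P" and po: "partial_order_on P r" and w: "width P r \<le> 1" and p: "p \<in> P"
  shows "l \<in> min_set r P \<Longrightarrow> (l, p) \<in> r" and "u \<in> max_set r P \<Longrightarrow> (p, u) \<in> r"
  using width_le_1_comparable[OF fin po w p] p po
  by (auto simp: min_set_def max_set_def partial_order_on_def preorder_on_def refl_on_def)

text \<open>If everything in L is below all of P and everything in U
  above, membership in a class does not depend on the element: it is empty or all of
  P.\<close>

lemma cls_trivial: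
  assumes "\<And>l p. l \<in> L \<Longrightarrow> p \<in> P \<Longrightarrow> (l, p) \<in> r"
    and "\<And>u p. u \<in> U \<Longrightarrow> p \<in> P \<Longrightarrow> (p, u) \<in> r"
  shows "cls P r L U R = {} \<or> cls P r L U R = P"
proof (cases "L \<union> U \<subseteq> R")
  case True
  then have "cls P r L U R = P" using assms by (auto simp: cls_def)
  then show ?thesis ..
next
  case False
  then have "cls P r L U R = {}" using assms by (auto simp: cls_def)
  then show ?thesis ..
qed

lemma width_le_1_LU:
  assumes fin: "finite P" and po: "partial_order_on P r" and w: "width P r \<le> 1"
  shows "Lset P r i \<subseteq> min_set r P \<and> Uset P r i \<subseteq> max_set r P"
proof (induction i)
  case 0
  then show ?case by (auto simp: Lset_0 Uset_0)
next
  case (Suc i)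
  have "cls P r (Lset P r i) (Uset P r i) R = {} \<or> cls P r (Lset P r i) (Uset P r i) R = P" for R
    using Suc.IH width_le_1_extremes[OF fin po w] by (intro cls_trivial) blast+
  then have "min_set r (cls P r (Lset P r i) (Uset P r i) R) \<subseteq> min_set r P"
    and "max_set r (cls P r (Lset P r i) (Uset P r i) R) \<subseteq> max_set r P" for R
    by (auto simp: min_set_def max_set_def)
  then show ?case using Suc.IH unfolding Lset_Suc Uset_Suc[of P r i] by blast
qed

lemma card_Pset_width_le_1:
  assumes fin: "finite P" and po: "partial_order_on P r" and w: "width P r \<le> 1"
  shows "card (Pset P r k) \<le> 2"
proof -
  have "Pset P r k \<subseteq> min_set r P \<union> max_set r P"
    using width_le_1_LU[OF assms] by (auto simp: Pset_def)
  then have "card (Pset P r k) \<le> card (min_set r P \<union> max_set r P)"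
    using fin by (intro card_mono) (auto simp: min_set_def max_set_def)
  also have "\<dots> \<le> card (min_set r P) + card (max_set r P)" by (rule card_Un_le)
  also have "\<dots> \<le> 2"
    using card_min_set_le_width[OF fin subset_refl, of r] card_max_set_le_width[OF fin subset_refl, of r] w
    by linarith
  finally show ?thesis .
qed

theorem lemma3:
  fixes P :: "'a set" and r :: "'a rel" and w k :: nat
  assumes "finite P"
    and "partial_order_on P r"
    and "width P r = w"
  shows "card (Pset P r k) \<le> 2 * w ^ ((3 * w) ^ k)"
proof -
  consider "w = 0" | "w = 1" | "2 \<le> w" by linarith
  then show ?thesis
  proof cases
    case 1
    then have "Pset P r k = {}" using width_0_empty[OF assms(1), of r] Pset_subset[of P r k] assms(3) by blast
    then show ?thesis by simp
  next
    case 2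
    then show ?thesis using card_Pset_width_le_1[OF assms(1,2)] assms(3) by simp
  next
    case 3
    then show ?thesis using card_Pset_wide[OF assms(1,2)] assms(3) by simp
  qed
qed

end
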